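(* Let $(\mathscr{P},\mathscr{B},\mathrm{I})$ be an incidence structure with incidence graph $\Gamma$, let $\varphi$ be a gain function on $\Gamma$ with gain group $G$ acting on the left on a nonempty set $\Lambda$, and let $f:\mathscr{P}\cup\mathscr{B}\to G$ be any function. Let ${}^f\varphi$ be the switched gain function ${}^f\varphi(e)=f(p)\varphi(e)f(b)^{-1}$ for each edge $e=bp$ (oriented from the line $b$ to the point $p$). Write $\mathfrak{M}(\Gamma,\varphi)=(\mathscr{P}',\mathscr{B}',\mathrm{I}')$ and $\mathfrak{M}(\Gamma,{}^f\varphi)=(\mathscr{P}',\mathscr{B}',\mathrm{I}'_f)$. Define $g_1:\mathscr{P}'\to\mathscr{P}'$ by $g_1(x_p)=x_p$ and $g_1(y_{b,\lambda})=y_{b,f(b)\cdot\lambda}$, and $g_2:\mathscr{B}'\to\mathscr{B}'$ by $g_2(z_{p,\lambda})=z_{p,f(p)\cdot\lambda}$. Then $(g_1,g_2)$ is an incidence structure isomorphism from $\mathfrak{M}(\Gamma,\varphi)$ to $\mathfrak{M}(\Gamma,{}^f\varphi)$, i.e. $g_1,g_2$ are bijections and $u\ \mathrm{I}'\ z$ if and only if $g_1(u)\ \mathrm{I}'_f\ g_2(z)$.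
   Context: An incidence structure is a triple $(\mathscr{P},\mathscr{B},\mathrm{I})$ where $\mathscr{P}$ (points) and $\mathscr{B}$ (lines) are nonempty disjoint sets and $\mathrm{I}\subseteq\mathscr{P}\times\mathscr{B}$ is a nonempty incidence relation; write $p\ \mathrm{I}\ b$ when $(p,b)\in\mathrm{I}$. The incidence graph $\Gamma$ is the bipartite graph with vertex set $\mathscr{P}\cup\mathscr{B}$ and an edge $bp$ for each incident pair; every edge is oriented from its line to its point. A gain function with gain group $G$ assigns to each edge $e$ an element $\varphi(e)\in G$. The gain group acts on $\Lambda$ on the left. Construction $\mathfrak{M}(\Gamma,\varphi)$: the incidence structure whose points are the formal symbols $x_p$ ($p\in\mathscr{P}$) and $y_{b,\lambda}$ ($b\in\mathscr{B},\lambda\in\Lambda$), whose lines are the formal symbols $z_{p,\lambda}$ ($p\in\mathscr{P},\lambda\in\Lambda$), and whose incidences are exactly: $x_p$ incident with $z_{p,\lambda}$ for all $\lambda$, and $y_{b,\lambda}$ incident with $z_{p,\mu}$ whenever $b\ \mathrm{I}\ p$ and $\mu=\varphi(bp)\cdot\lambda$. Note $\mathfrak{M}(\Gamma,\varphi)$ and $\mathfrak{M}(\Gamma,{}^f\varphi)$ have the same point and line sets. *)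

theory Defs
  imports "HOL-Algebra.Group_Action"
begin

definition incidence_structure :: "'a set \<Rightarrow> 'a set \<Rightarrow> ('a \<times> 'a) set \<Rightarrow> bool" where
  "incidence_structure P B I \<longleftrightarrow> P \<noteq> {} \<and> B \<noteq> {} \<and> P \<inter> B = {} \<and> I \<subseteq> P \<times> B \<and> I \<noteq> {}"

(* A gain function assigns to each edge bp of the incidence graph (i.e. each (p,b) \<in> I,
   oriented from line b to point p) an element phi b p of the gain group. *)
definition gain_function :: "('g, 'm) monoid_scheme \<Rightarrow> ('a \<times> 'a) set \<Rightarrow> ('a \<Rightarrow> 'a \<Rightarrow> 'g) \<Rightarrow> bool" where
  "gain_function G I phi \<longleftrightarrow> (\<forall>(p, b) \<in> I. phi b p \<in> carrier G)"

definition switch :: "('g, 'm) monoid_scheme \<Rightarrow> ('a \<Rightarrow> 'g) \<Rightarrow> ('a \<Rightarrow> 'a \<Rightarrow> 'g) \<Rightarrow> 'a \<Rightarrow> 'a \<Rightarrow> 'g" where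
  "switch G f phi b p = f p \<otimes>\<^bsub>G\<^esub> phi b p \<otimes>\<^bsub>G\<^esub> inv\<^bsub>G\<^esub> (f b)"

datatype ('a, 'l) mpoint = X 'a | Y 'a 'l
datatype ('a, 'l) mline = Z 'a 'l

definition M_points :: "'a set \<Rightarrow> 'a set \<Rightarrow> 'l set \<Rightarrow> ('a, 'l) mpoint set" where
  "M_points P B \<Lambda> = {X p | p. p \<in> P} \<union> {Y b l | b l. b \<in> B \<and> l \<in> \<Lambda>}"

definition M_lines :: "'a set \<Rightarrow> 'l set \<Rightarrow> ('a, 'l) mline set" where
  "M_lines P \<Lambda> = {Z p l | p l. p \<in> P \<and> l \<in> \<Lambda>}"

definition M_inc :: "'a set \<Rightarrow> ('a \<times> 'a) set \<Rightarrow> 'l set \<Rightarrow> ('g \<Rightarrow> 'l \<Rightarrow> 'l) \<Rightarrow> ('a \<Rightarrow> 'a \<Rightarrow> 'g)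
    \<Rightarrow> (('a, 'l) mpoint \<times> ('a, 'l) mline) set" where
  "M_inc P I \<Lambda> act phi =
     {(X p, Z p l) | p l. p \<in> P \<and> l \<in> \<Lambda>}
   \<union> {(Y b l, Z p (act (phi b p) l)) | b p l. (p, b) \<in> I \<and> l \<in> \<Lambda>}"

fun g1 :: "('g \<Rightarrow> 'l \<Rightarrow> 'l) \<Rightarrow> ('a \<Rightarrow> 'g) \<Rightarrow> ('a, 'l) mpoint \<Rightarrow> ('a, 'l) mpoint" where
  "g1 act f (X p) = X p"
| "g1 act f (Y b l) = Y b (act (f b) l)"

fun g2 :: "('g \<Rightarrow> 'l \<Rightarrow> 'l) \<Rightarrow> ('a \<Rightarrow> 'g) \<Rightarrow> ('a, 'l) mline \<Rightarrow> ('a, 'l) mline" where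
  "g2 act f (Z p l) = Z p (act (f p) l)"

end

theory Submission
  imports Defs
begin

text \<open>Switching by \<open>f\<close> only relabels the fibre over each vertex \<open>v\<close> by the permutation
  \<open>f(v)\<close> of \<open>\<Lambda>\<close>: the incidence \<open>y\<^sub>b\<^sub>,\<^sub>\<lambda> I z\<^sub>p\<^sub>,\<^sub>\<mu>\<close> with \<open>\<mu> = \<phi>(bp) \<lambda>\<close> holds iff
  \<open>f(p) \<mu> = f(p) \<phi>(bp) f(b)\<^sup>-\<^sup>1 (f(b) \<lambda>)\<close>, which is the switched incidence between the
  relabelled symbols.\<close>

lemma X_Z_in_M_inc_iff:
  "(X p, Z q m) \<in> M_inc P I \<Lambda> act phi \<longleftrightarrow> p = q \<and> p \<in> P \<and> m \<in> \<Lambda>"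
  unfolding M_inc_def by auto

lemma Y_Z_in_M_inc_iff:
  "(Y b l, Z p m) \<in> M_inc P I \<Lambda> act phi \<longleftrightarrow> (p, b) \<in> I \<and> l \<in> \<Lambda> \<and> m = act (phi b p) l"
  unfolding M_inc_def by auto

lemma bij_betw_g1:
  assumes "\<forall>b \<in> B. bij_betw (act (f b)) \<Lambda> \<Lambda>"
  shows "bij_betw (g1 act f) (M_points P B \<Lambda>) (M_points P B \<Lambda>)"
proof (rule bij_betw_imageI)
  have "inj_on (act (f b)) \<Lambda>" if "b \<in> B" for b
    using assms that bij_betw_imp_inj_on by blast
  then show "inj_on (g1 act f) (M_points P B \<Lambda>)"
    unfolding inj_on_def M_points_def by (auto simp: inj_on_eq_iff)
  show "g1 act f ` M_points P B \<Lambda> = M_points P B \<Lambda>"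
  proof
    show "g1 act f ` M_points P B \<Lambda> \<subseteq> M_points P B \<Lambda>"
      using assms unfolding M_points_def by (auto simp: bij_betw_apply)
    show "M_points P B \<Lambda> \<subseteq> g1 act f ` M_points P B \<Lambda>"
    proof
      fix u assume "u \<in> M_points P B \<Lambda>"
      then consider p where "u = X p" "p \<in> P" | b l where "u = Y b l" "b \<in> B" "l \<in> \<Lambda>"
        unfolding M_points_def by auto
      then show "u \<in> g1 act f ` M_points P B \<Lambda>"
      proof cases
        case 1
        then show ?thesis
          unfolding M_points_def by (auto intro!: image_eqI[where x = "X p"])
      next
        case (2 b l)
        obtain l' where "l' \<in> \<Lambda>" "act (f b) l' = l"
          using assms 2 by (metis bij_betw_imp_surj_on imageE)
        then show ?thesis
          using 2 unfolding M_points_def by (auto intro!: image_eqI[where x = "Y b l'"])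
      qed
    qed
  qed
qed

lemma bij_betw_g2:
  assumes "\<forall>p \<in> P. bij_betw (act (f p)) \<Lambda> \<Lambda>"
  shows "bij_betw (g2 act f) (M_lines P \<Lambda>) (M_lines P \<Lambda>)"
proof (rule bij_betw_imageI)
  have "inj_on (act (f p)) \<Lambda>" if "p \<in> P" for p
    using assms that bij_betw_imp_inj_on by blast
  then show "inj_on (g2 act f) (M_lines P \<Lambda>)"
    unfolding inj_on_def M_lines_def by (auto simp: inj_on_eq_iff)
  show "g2 act f ` M_lines P \<Lambda> = M_lines P \<Lambda>"
  proof
    show "g2 act f ` M_lines P \<Lambda> \<subseteq> M_lines P \<Lambda>"
      using assms unfolding M_lines_def by (auto simp: bij_betw_apply)
    show "M_lines P \<Lambda> \<subseteq> g2 act f ` M_lines P \<Lambda>"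
    proof
      fix z assume "z \<in> M_lines P \<Lambda>"
      then obtain p l where z: "z = Z p l" "p \<in> P" "l \<in> \<Lambda>"
        unfolding M_lines_def by auto
      then obtain l' where "l' \<in> \<Lambda>" "act (f p) l' = l"
        using assms by (metis bij_betw_imp_surj_on imageE)
      then show "z \<in> g2 act f ` M_lines P \<Lambda>"
        using z unfolding M_lines_def by (auto intro!: image_eqI[where x = "Z p l'"])
    qed
  qed
qed

context group_action
begin

lemma bij_betw_act: "g \<in> carrier G \<Longrightarrow> bij_betw (\<phi> g) E E"
  using bij_prop0 by (simp add: Bij_def)

lemma act_closed: "g \<in> carrier G \<Longrightarrow> x \<in> E \<Longrightarrow> \<phi> g x \<in> E"
  using element_image by blast

lemma act_switch:
  assumes "h \<in> carrier G" "g \<in> carrier G" "k \<in> carrier G" "x \<in> E"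
  shows "\<phi> (h \<otimes> g \<otimes> inv k) (\<phi> k x) = \<phi> h (\<phi> g x)"
proof -
  interpret group G
    using group_hom group_hom.axioms(1) by blast
  have "\<phi> (h \<otimes> g \<otimes> inv k) (\<phi> k x) = \<phi> (h \<otimes> g) (\<phi> (inv k) (\<phi> k x))"
    using assms by (intro composition_rule) (auto intro: act_closed)
  also have "\<dots> = \<phi> (h \<otimes> g) x"
    using assms by (simp add: orbit_sym_aux)
  also have "\<dots> = \<phi> h (\<phi> g x)"
    using assms by (simp add: composition_rule)
  finally show ?thesis .
qed

lemma M_inc_switch_iff:
  assumes "gain_function G I phi" "f \<in> P \<union> B \<rightarrow> carrier G"
    and u: "u \<in> M_points P B E" and z: "z \<in> M_lines P E"
  shows "(u, z) \<in> M_inc P I E \<phi> phi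
           \<longleftrightarrow> (g1 \<phi> f u, g2 \<phi> f z) \<in> M_inc P I E \<phi> (switch G f phi)"
proof -
  obtain q m where z_def: "z = Z q m" and "q \<in> P" "m \<in> E"
    using z unfolding M_lines_def by auto
  then have fq: "f q \<in> carrier G"
    using assms(2) by auto
  consider p where "u = X p" "p \<in> P" | b l where "u = Y b l" "b \<in> B" "l \<in> E"
    using u unfolding M_points_def by auto
  then show ?thesis
  proof cases
    case 1
    then show ?thesis
      using z_def \<open>m \<in> E\<close> fq by (simp add: X_Z_in_M_inc_iff act_closed)
  next
    case (2 b l)
    have fb: "f b \<in> carrier G"
      using \<open>b \<in> B\<close> assms(2) by auto
    have "(u, z) \<in> M_inc P I E \<phi> phi \<longleftrightarrow> (q, b) \<in> I \<and> m = \<phi> (phi b q) l"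
      using 2 z_def by (simp add: Y_Z_in_M_inc_iff)
    also have "\<dots> \<longleftrightarrow> (q, b) \<in> I \<and> \<phi> (f q) m = \<phi> (switch G f phi b q) (\<phi> (f b) l)"
    proof (intro conj_cong refl)
      assume "(q, b) \<in> I"
      then have phi_bq: "phi b q \<in> carrier G"
        using assms(1) unfolding gain_function_def by auto
      then have "\<phi> (switch G f phi b q) (\<phi> (f b) l) = \<phi> (f q) (\<phi> (phi b q) l)"
        unfolding switch_def using fq fb \<open>l \<in> E\<close> by (simp add: act_switch)
      then show "m = \<phi> (phi b q) l
          \<longleftrightarrow> \<phi> (f q) m = \<phi> (switch G f phi b q) (\<phi> (f b) l)"
        using inj_prop[OF fq] phi_bq \<open>m \<in> E\<close> \<open>l \<in> E\<close>
        by (simp add: inj_on_eq_iff act_closed)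
    qed
    also have "\<dots> \<longleftrightarrow> (g1 \<phi> f u, g2 \<phi> f z) \<in> M_inc P I E \<phi> (switch G f phi)"
      using 2 z_def fb by (simp add: Y_Z_in_M_inc_iff act_closed)
    finally show ?thesis .
  qed
qed

end

theorem proposition1:
  fixes G :: "('g, 'm) monoid_scheme"
    and P B :: "'a set" and I :: "('a \<times> 'a) set"
    and \<Lambda> :: "'l set" and act :: "'g \<Rightarrow> 'l \<Rightarrow> 'l"
    and phi :: "'a \<Rightarrow> 'a \<Rightarrow> 'g" and f :: "'a \<Rightarrow> 'g"
  assumes "incidence_structure P B I"
    and "group G"
    and "group_action G \<Lambda> act"
    and "\<Lambda> \<noteq> {}"
    and "gain_function G I phi"
    and "f \<in> P \<union> B \<rightarrow> carrier G"
  shows "bij_betw (g1 act f) (M_points P B \<Lambda>) (M_points P B \<Lambda>)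
       \<and> bij_betw (g2 act f) (M_lines P \<Lambda>) (M_lines P \<Lambda>)
       \<and> (\<forall>u \<in> M_points P B \<Lambda>. \<forall>z \<in> M_lines P \<Lambda>.
            (u, z) \<in> M_inc P I \<Lambda> act phi
              \<longleftrightarrow> (g1 act f u, g2 act f z) \<in> M_inc P I \<Lambda> act (switch G f phi))"
proof -
  interpret group_action G \<Lambda> act by fact
  have "bij_betw (act (f v)) \<Lambda> \<Lambda>" if "v \<in> P \<union> B" for v
    using assms(6) that by (simp add: Pi_iff bij_betw_act)
  then show ?thesis
    by (simp add: bij_betw_g1 bij_betw_g2 M_inc_switch_iff[OF assms(5,6)])
qed

end
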